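(* Consider $f:\mathbb R^n\to\mathbb R$ convex and continuously differentiable, $A\in\mathbb R^{m\times n}$, $b\in\mathbb R^m$, with nonempty KKT set $\Omega$. Let $\{(x_k,\lambda_k)\}_{k\ge0}$ be generated by the algorithm described in the context, write $z_k=(x_k,\lambda_k)$, and fix $z^*=(x^*,\lambda^* )\in\Omega$. Define $H_k=\mathcal L_\beta(x_k,\lambda^* )-\mathcal L_\beta(x^*,\lambda^* )$, $w_k=\eta(z_k-z^* )+(t_k-1)(z_k-z_{k-1})$, $B_k=\frac12\|w_k\|_M^2+\frac{\eta(1-\eta)}2\|z_k-z^*\|_M^2$ and $\mathcal E_k=t_k^2H_k+B_k$ for $k\ge1$. Then, for both Case I and Case II and every $k\ge1$, $\mathcal E_{k+1}-\mathcal E_k\le(\rho-\eta)t_{k+1}H_k-(1-\eta)(t_{k+1}-\tfrac12)\|z_{k+1}-z_k\|_M^2$.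
   Context: The KKT set is $\Omega=\{(x^*,\lambda^* ): Ax^*=b,\ \nabla f(x^* )+A^\top\lambda^*=0\}$. $\mathcal L_\beta(x,\lambda)=f(x)+\langle\lambda,Ax-b\rangle+\frac\beta2\|Ax-b\|^2$. For $z=(x,\lambda)$, $\|z\|_M^2=\frac1\gamma\|x\|^2+\frac1\delta\|\lambda\|^2$. Parameter sequence: $\{t_k\}_{k\ge1}$ is nondecreasing, $t_1=1$, $t_k>1$ for all $k>2$, $t_k\to+\infty$, and $t_{k+1}^2-t_k^2\le\rho t_{k+1}$ for all $k\ge 1$, with fixed $\rho\in(0,1]$. Fix $\eta\in[\rho,1]$, $\gamma>0$, $\delta>0$, $\beta\ge0$. Algorithm: initial points $x_0=x_1\in\mathbb R^n$, $\lambda_0=\lambda_1\in\mathbb R^m$. For $k=1,2,\dots$: set $\alpha_k=(t_{k+1}-\eta)/\eta$, $c_k=t_{k+1}/\eta$, $\bar x_k=x_k+\frac{t_k-1}{t_{k+1}}(x_k-x_{k-1})$, $\bar\lambda_k=\lambda_k+\frac{t_k-1}{t_{k+1}}(\lambda_k-\lambda_{k-1})$, $p_k=c_k\bar\lambda_k-\alpha_k\lambda_k$, $r_k=\alpha_kAx_k+b$. Case I ($f$ convex and $C^1$): $x_{k+1}=\arg\min_{x}\{f(x)+\frac\beta2\|Ax-b\|^2+\frac1{2\gamma}\|x-\bar x_k\|^2+\langle p_k,Ax-b\rangle+\frac\delta2\|c_kAx-r_k\|^2\}$. Case II ($f$ convex with $L$-Lipschitz gradient, and $\gamma\le 1/L$):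 $x_{k+1}=\arg\min_{x}\{\langle\nabla f(\bar x_k),x\rangle+\frac\beta2\|Ax-b\|^2+\frac1{2\gamma}\|x-\bar x_k\|^2+\langle p_k,Ax-b\rangle+\frac\delta2\|c_kAx-r_k\|^2\}$. Then $\lambda_{k+1}=\bar\lambda_k+\delta(c_kAx_{k+1}-r_k)$. *)

theory Defs
  imports "HOL-Analysis.Analysis"
begin

definition aug_lag ::
  "(real^'n \<Rightarrow> real) \<Rightarrow> real^'n^'m \<Rightarrow> real^'m \<Rightarrow> real \<Rightarrow> real^'n \<Rightarrow> real^'m \<Rightarrow> real" where
  "aug_lag f A b \<beta> x l = f x + l \<bullet> (A *v x - b) + \<beta> / 2 * (norm (A *v x - b))\<^sup>2"

definition Mnorm2 :: "real \<Rightarrow> real \<Rightarrow> real^'n \<Rightarrow> real^'m \<Rightarrow> real" where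
  "Mnorm2 \<gamma> \<delta> x l = (1 / \<gamma>) * (norm x)\<^sup>2 + (1 / \<delta>) * (norm l)\<^sup>2"

definition KKT :: "(real^'n \<Rightarrow> real^'n) \<Rightarrow> real^'n^'m \<Rightarrow> real^'m \<Rightarrow> ((real^'n) \<times> (real^'m)) set" where
  "KKT g A b = {(x, l). A *v x = b \<and> g x + transpose A *v l = 0}"

text \<open>Case I subproblem objective (xb = bar x_k, p = p_k, c = c_k, r = r_k).\<close>
definition phiI ::
  "(real^'n \<Rightarrow> real) \<Rightarrow> real^'n^'m \<Rightarrow> real^'m \<Rightarrow> real \<Rightarrow> real \<Rightarrow> real \<Rightarrow>
   real^'n \<Rightarrow> real^'m \<Rightarrow> real \<Rightarrow> real^'m \<Rightarrow> real^'n \<Rightarrow> real" where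
  "phiI f A b \<beta> \<gamma> \<delta> xb p c r x =
     f x + \<beta> / 2 * (norm (A *v x - b))\<^sup>2 + 1 / (2 * \<gamma>) * (norm (x - xb))\<^sup>2
     + p \<bullet> (A *v x - b) + \<delta> / 2 * (norm (c *\<^sub>R (A *v x) - r))\<^sup>2"

text \<open>Case II subproblem objective (linearised f at xb; g is the gradient of f).\<close>
definition phiII ::
  "(real^'n \<Rightarrow> real^'n) \<Rightarrow> real^'n^'m \<Rightarrow> real^'m \<Rightarrow> real \<Rightarrow> real \<Rightarrow> real \<Rightarrow>
   real^'n \<Rightarrow> real^'m \<Rightarrow> real \<Rightarrow> real^'m \<Rightarrow> real^'n \<Rightarrow> real" where
  "phiII g A b \<beta> \<gamma> \<delta> xb p c r x =
     g xb \<bullet> x + \<beta> / 2 * (norm (A *v x - b))\<^sup>2 + 1 / (2 * \<gamma>) * (norm (x - xb))\<^sup>2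
     + p \<bullet> (A *v x - b) + \<delta> / 2 * (norm (c *\<^sub>R (A *v x) - r))\<^sup>2"

end

theory Submission
  imports Defs
begin

(* Fix k and write T = t (k+1), S = t k.  The optimality condition of the x-subproblem provides a
   vector zeta (the gradient of f at x (k+1) in Case I, at the extrapolated point xbar in Case II,
   where the descent lemma pays for the linearisation) with
     (T - eta) (f x(k+1) - f x k) + eta (f x(k+1) - f xs) <= <zeta, v> + T/(2 gamma) |x(k+1) - xbar|^2,
   v = T (x(k+1) - x k) + eta (x k - xs).  Stationarity, the multiplier update and A xs = b rewrite
   <zeta, v> through the primal and dual steps, the penalty terms combining into a nonpositive square.
   This bounds T H(k+1) - (T - eta) H k by the M-weighted sum of T/2 |u|^2 - <u, v> over the primal
   and dual steps u from the extrapolated points, and an exact polarisation identity rewrites T times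
   this sum as B k - B(k+1) - (1 - eta) (T - 1/2) |z(k+1) - z k|_M^2.  Finally T^2 - S^2 <= rho T and
   H k >= 0 turn T (T H(k+1) - (T - eta) H k) into the energy difference up to (rho - eta) T H k. *)

lemma has_field_derivative_along_line:
  fixes f :: "'a::real_inner \<Rightarrow> real"
  assumes "\<And>y. GDERIV f y :> g y"
  shows "((\<lambda>s. f (x + s *\<^sub>R v)) has_field_derivative (g (x + s *\<^sub>R v) \<bullet> v)) (at s within S)"
proof -
  have "((\<lambda>s. x + s *\<^sub>R v) has_derivative (\<lambda>h. h *\<^sub>R v)) (at s within S)"
    by (auto intro!: derivative_eq_intros)
  moreover have "(f has_derivative (\<lambda>h. h \<bullet> g (x + s *\<^sub>R v))) (at (x + s *\<^sub>R v))"
    using assms by (simp add: gderiv_def)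
  ultimately have "((\<lambda>s. f (x + s *\<^sub>R v)) has_derivative (\<lambda>h. (h *\<^sub>R v) \<bullet> g (x + s *\<^sub>R v)))
      (at s within S)"
    by (rule has_derivative_compose)
  then show ?thesis
    unfolding has_field_derivative_def
    by (rule has_derivative_eq_rhs) (simp add: fun_eq_iff inner_commute)
qed

lemma convex_gradient_inequality:
  fixes f :: "'a::real_inner \<Rightarrow> real"
  assumes convex: "convex_on UNIV f" and grad: "\<And>y. GDERIV f y :> g y"
  shows "f x + g x \<bullet> (y - x) \<le> f y"
proof -
  define h where "h s = f (x + s *\<^sub>R (y - x))" for s :: real
  have "convex_on UNIV h"
  proof (rule convex_onI)
    fix \<tau> a c :: real assume "0 < \<tau>" "\<tau> < 1"
    moreover have "x + ((1 - \<tau>) * a + \<tau> * c) *\<^sub>R (y - x)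
        = (1 - \<tau>) *\<^sub>R (x + a *\<^sub>R (y - x)) + \<tau> *\<^sub>R (x + c *\<^sub>R (y - x))"
      by (simp add: algebra_simps)
    ultimately show "h ((1 - \<tau>) *\<^sub>R a + \<tau> *\<^sub>R c) \<le> (1 - \<tau>) * h a + \<tau> * h c"
      using convex_onD[OF convex, of \<tau> "x + a *\<^sub>R (y - x)" "x + c *\<^sub>R (y - x)"]
      by (simp add: h_def)
  qed simp
  moreover have "(h has_field_derivative g x \<bullet> (y - x)) (at 0 within UNIV)"
    using has_field_derivative_along_line[OF grad, where x = x and s = 0 and v = "y - x"]
    by (simp add: h_def[abs_def])
  ultimately have "h 1 - h 0 \<ge> (g x \<bullet> (y - x)) * (1 - 0)"
    by (intro convex_on_imp_above_tangent) auto
  then show ?thesis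
    by (simp add: h_def)
qed

lemma lipschitz_gradient_upper_bound:
  fixes f :: "'a::real_inner \<Rightarrow> real"
  assumes grad: "\<And>y. GDERIV f y :> g y" and "L \<ge> 0"
    and lipschitz: "\<And>y z. norm (g y - g z) \<le> L * norm (y - z)"
  shows "f y \<le> f x + g x \<bullet> (y - x) + L / 2 * (norm (y - x))\<^sup>2"
proof -
  define v where "v = y - x"
  define \<phi> where "\<phi> s = f (x + s *\<^sub>R v) - s * (g x \<bullet> v) - L / 2 * s\<^sup>2 * (norm v)\<^sup>2" for s
  have nonpos: "\<exists>D. DERIV \<phi> s :> D \<and> D \<le> 0" if "0 \<le> s" for s
  proof (intro exI conjI)
    show "DERIV \<phi> s :> g (x + s *\<^sub>R v) \<bullet> v - g x \<bullet> v - L * s * (norm v)\<^sup>2"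
      unfolding \<phi>_def
      by (rule derivative_eq_intros has_field_derivative_along_line[OF grad] refl | simp)+
    have "g (x + s *\<^sub>R v) \<bullet> v - g x \<bullet> v \<le> norm (g (x + s *\<^sub>R v) - g x) * norm v"
      by (metis inner_diff_left norm_cauchy_schwarz)
    also have "\<dots> \<le> L * norm (s *\<^sub>R v) * norm v"
      using lipschitz[of "x + s *\<^sub>R v" x] by (simp add: mult_right_mono)
    also have "\<dots> = L * s * (norm v)\<^sup>2"
      using that by (simp add: power2_eq_square)
    finally show "g (x + s *\<^sub>R v) \<bullet> v - g x \<bullet> v - L * s * (norm v)\<^sup>2 \<le> 0"
      by simp
  qed
  have "\<phi> 1 \<le> \<phi> 0"
    by (rule DERIV_nonpos_imp_nonincreasing) (auto intro: nonpos)
  then show ?thesis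
    by (simp add: \<phi>_def v_def)
qed

lemma gderiv_inner_const: "GDERIV (\<lambda>z. a \<bullet> z) y :> a"
  by (auto simp: gderiv_def inner_commute intro!: derivative_eq_intros)

lemma phiII_eq_phiI_linearized:
  "phiII g A b \<beta> \<gamma> \<delta> xb p c r = phiI (\<lambda>z. g xb \<bullet> z) A b \<beta> \<gamma> \<delta> xb p c r"
  by (simp add: fun_eq_iff phiI_def phiII_def)

lemma phiI_has_derivative:
  assumes "GDERIV F x :> \<zeta>"
  shows "(phiI F A b \<beta> \<gamma> \<delta> xb p c r has_derivative
     (\<lambda>h. \<zeta> \<bullet> h + (1 / \<gamma>) * ((x - xb) \<bullet> h)
        + (\<beta> *\<^sub>R (A *v x - b) + p + (\<delta> * c) *\<^sub>R (c *\<^sub>R (A *v x) - r)) \<bullet> (A *v h))) (at x)"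
proof -
  have F: "(F has_derivative (\<lambda>h. h \<bullet> \<zeta>)) (at x)"
    using assms by (simp add: gderiv_def)
  have A: "((*v) A has_derivative (*v) A) (at x)"
    by (simp add: bounded_linear_imp_has_derivative)
  show ?thesis
    unfolding phiI_def power2_norm_eq_inner
    by (rule has_derivative_eq_rhs, (rule derivative_intros F A)+)
      (simp add: fun_eq_iff inner_commute algebra_simps inner_add_left inner_diff_left)
qed

lemma phiI_minimizer_stationary:
  assumes "\<forall>y. phiI F A b \<beta> \<gamma> \<delta> xb p c r x \<le> phiI F A b \<beta> \<gamma> \<delta> xb p c r y"
    and "GDERIV F x :> \<zeta>"
  shows "\<zeta> \<bullet> h + (1 / \<gamma>) * ((x - xb) \<bullet> h)
     + (\<beta> *\<^sub>R (A *v x - b) + p + (\<delta> * c) *\<^sub>R (c *\<^sub>R (A *v x) - r)) \<bullet> (A *v h) = 0"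
proof -
  have "(\<lambda>h. \<zeta> \<bullet> h + (1 / \<gamma>) * ((x - xb) \<bullet> h)
      + (\<beta> *\<^sub>R (A *v x - b) + p + (\<delta> * c) *\<^sub>R (c *\<^sub>R (A *v x) - r)) \<bullet> (A *v h)) = (\<lambda>h. 0)"
    using assms(1) by (intro has_derivative_local_min[OF phiI_has_derivative[OF assms(2)]])
      (simp add: always_eventually)
  then show ?thesis
    by (simp add: fun_eq_iff)
qed

lemma subproblem_solution:
  fixes f :: "real^'n \<Rightarrow> real" and A :: "real^'n^'m"
  assumes convex: "convex_on UNIV f" and grad: "\<And>y. GDERIV f y :> g y" and "\<gamma> > 0"
    and solves: "(\<forall>y. phiI f A b \<beta> \<gamma> \<delta> xb p c r x \<le> phiI f A b \<beta> \<gamma> \<delta> xb p c r y)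
      \<or> (\<exists>L>0. (\<forall>y z. norm (g y - g z) \<le> L * norm (y - z)) \<and> \<gamma> \<le> 1 / L
            \<and> (\<forall>y. phiII g A b \<beta> \<gamma> \<delta> xb p c r x \<le> phiII g A b \<beta> \<gamma> \<delta> xb p c r y))"
  obtains \<zeta> where "\<And>y. f x - f y \<le> \<zeta> \<bullet> (x - y) + 1 / (2 * \<gamma>) * (norm (x - xb))\<^sup>2"
    and "\<And>h. \<zeta> \<bullet> h + (1 / \<gamma>) * ((x - xb) \<bullet> h)
      + (\<beta> *\<^sub>R (A *v x - b) + p + (\<delta> * c) *\<^sub>R (c *\<^sub>R (A *v x) - r)) \<bullet> (A *v h) = 0"
  using solves
proof
  assume min: "\<forall>y. phiI f A b \<beta> \<gamma> \<delta> xb p c r x \<le> phiI f A b \<beta> \<gamma> \<delta> xb p c r y"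
  show thesis
  proof (rule that)
    have "0 \<le> 1 / (2 * \<gamma>) * (norm (x - xb))\<^sup>2"
      using \<open>\<gamma> > 0\<close> by simp
    then show "f x - f y \<le> g x \<bullet> (x - y) + 1 / (2 * \<gamma>) * (norm (x - xb))\<^sup>2" for y
      using convex_gradient_inequality[OF convex grad, of x y] unfolding inner_diff_right by linarith
  qed (rule phiI_minimizer_stationary[OF min grad])
next
  assume "\<exists>L>0. (\<forall>y z. norm (g y - g z) \<le> L * norm (y - z)) \<and> \<gamma> \<le> 1 / L
            \<and> (\<forall>y. phiII g A b \<beta> \<gamma> \<delta> xb p c r x \<le> phiII g A b \<beta> \<gamma> \<delta> xb p c r y)"
  then obtain L where "L > 0" and lipschitz: "\<And>y z. norm (g y - g z) \<le> L * norm (y - z)"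
    and "\<gamma> \<le> 1 / L"
    and min: "\<forall>y. phiI (\<lambda>z. g xb \<bullet> z) A b \<beta> \<gamma> \<delta> xb p c r x \<le> phiI (\<lambda>z. g xb \<bullet> z) A b \<beta> \<gamma> \<delta> xb p c r y"
    by (auto simp: phiII_eq_phiI_linearized)
  show thesis
  proof (rule that[of "g xb"])
    fix y
    have "L / 2 \<le> 1 / (2 * \<gamma>)"
      using \<open>L > 0\<close> \<open>\<gamma> > 0\<close> \<open>\<gamma> \<le> 1 / L\<close> by (simp add: field_simps)
    then have "L / 2 * (norm (x - xb))\<^sup>2 \<le> 1 / (2 * \<gamma>) * (norm (x - xb))\<^sup>2"
      by (rule mult_right_mono) simp
    moreover have "f x \<le> f xb + g xb \<bullet> (x - xb) + L / 2 * (norm (x - xb))\<^sup>2"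
      by (rule lipschitz_gradient_upper_bound[OF grad less_imp_le[OF \<open>L > 0\<close>] lipschitz])
    ultimately have "f x \<le> f xb + g xb \<bullet> (x - xb) + 1 / (2 * \<gamma>) * (norm (x - xb))\<^sup>2"
      by linarith
    then show "f x - f y \<le> g xb \<bullet> (x - y) + 1 / (2 * \<gamma>) * (norm (x - xb))\<^sup>2"
      using convex_gradient_inequality[OF convex grad, of xb y]
      unfolding inner_diff_right by linarith
  qed (rule phiI_minimizer_stationary[OF min gderiv_inner_const])
qed

lemma aug_lag_gap_nonneg:
  fixes f :: "real^'n \<Rightarrow> real"
  assumes convex: "convex_on UNIV f" and grad: "\<And>y. GDERIV f y :> g y" and "\<beta> \<ge> 0"
    and kkt: "(xs, ls) \<in> KKT g A b"
  shows "aug_lag f A b \<beta> x ls - aug_lag f A b \<beta> xs ls \<ge> 0"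
proof -
  have "A *v xs = b" and "g xs = - (transpose A *v ls)"
    using kkt by (auto simp: KKT_def eq_neg_iff_add_eq_0)
  then have "g xs \<bullet> (x - xs) = - (ls \<bullet> (A *v x - b))"
    by (simp add: dot_lmul_matrix matrix_vector_mult_diff_distrib)
  moreover have "aug_lag f A b \<beta> xs ls = f xs"
    using \<open>A *v xs = b\<close> by (simp add: aug_lag_def)
  moreover have "0 \<le> \<beta> / 2 * (norm (A *v x - b))\<^sup>2"
    using \<open>\<beta> \<ge> 0\<close> by simp
  ultimately show ?thesis
    using convex_gradient_inequality[OF convex grad, of xs x] unfolding aug_lag_def by linarith
qed

(* One M-norm component of B_k, with e = x_k - xs and q = x_k - x_{k-1}; the weight 1/gamma
   or 1/delta is applied outside. *)
definition momentum_energy :: "real \<Rightarrow> real \<Rightarrow> 'a::real_inner \<Rightarrow> 'a \<Rightarrow> real" where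
  "momentum_energy \<eta> \<tau> e q = 1 / 2 * (norm (\<eta> *\<^sub>R e + (\<tau> - 1) *\<^sub>R q))\<^sup>2 + \<eta> * (1 - \<eta>) / 2 * (norm e)\<^sup>2"

lemma momentum_energy_step:
  fixes d e q :: "'a::real_inner"
  assumes "t \<noteq> 0"
  shows "t * (t / 2 * (norm (d - ((s - 1) / t) *\<^sub>R q))\<^sup>2 - (d - ((s - 1) / t) *\<^sub>R q) \<bullet> (t *\<^sub>R d + \<eta> *\<^sub>R e))
      + momentum_energy \<eta> t (d + e) d - momentum_energy \<eta> s e q
    = - (1 - \<eta>) * (t - 1 / 2) * (norm d)\<^sup>2"
  using assms unfolding momentum_energy_def power2_norm_eq_inner
  by (simp add: inner_add_left inner_add_right inner_diff_left inner_diff_right inner_commute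
      field_simps power2_eq_square)

lemma Mnorm2_momentum_energy:
  "1 / 2 * Mnorm2 \<gamma> \<delta> (\<eta> *\<^sub>R e + (\<tau> - 1) *\<^sub>R q) (\<eta> *\<^sub>R e' + (\<tau> - 1) *\<^sub>R q')
     + \<eta> * (1 - \<eta>) / 2 * Mnorm2 \<gamma> \<delta> e e'
   = (1 / \<gamma>) * momentum_energy \<eta> \<tau> e q + (1 / \<delta>) * momentum_energy \<eta> \<tau> e' q'"
  by (simp add: Mnorm2_def momentum_energy_def algebra_simps diff_divide_distrib)

lemma dual_update_identities:
  fixes A :: "real^'n^'m"
  assumes "\<eta> > 0" "\<delta> > 0" "A *v xs = b"
    and update: "l2 = lb + \<delta> *\<^sub>R ((T / \<eta>) *\<^sub>R (A *v x2) - (((T - \<eta>) / \<eta>) *\<^sub>R (A *v x1) + b))"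
  shows "A *v (T *\<^sub>R (x2 - x1) + \<eta> *\<^sub>R (x1 - xs)) = (\<eta> / \<delta>) *\<^sub>R (l2 - lb)"
    and "(T / \<eta>) *\<^sub>R lb - ((T - \<eta>) / \<eta>) *\<^sub>R l1
        + (\<delta> * (T / \<eta>)) *\<^sub>R ((T / \<eta>) *\<^sub>R (A *v x2) - (((T - \<eta>) / \<eta>) *\<^sub>R (A *v x1) + b))
      = ls + (1 / \<eta>) *\<^sub>R (T *\<^sub>R (l2 - l1) + \<eta> *\<^sub>R (l1 - ls))"
proof -
  have "A *v (T *\<^sub>R (x2 - x1) + \<eta> *\<^sub>R (x1 - xs)) = T *\<^sub>R (A *v x2) - (T - \<eta>) *\<^sub>R (A *v x1) - \<eta> *\<^sub>R b"
    using \<open>A *v xs = b\<close>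
    by (simp add: matrix_vector_right_distrib matrix_vector_mult_diff_distrib matrix_vector_mult_scaleR
        scaleR_diff_left scaleR_diff_right)
  also have "\<dots> = (\<eta> / \<delta>) *\<^sub>R (l2 - lb)"
    unfolding update using assms(1,2) by (simp add: vec_eq_iff field_simps)
  finally show "A *v (T *\<^sub>R (x2 - x1) + \<eta> *\<^sub>R (x1 - xs)) = (\<eta> / \<delta>) *\<^sub>R (l2 - lb)" .
  show "(T / \<eta>) *\<^sub>R lb - ((T - \<eta>) / \<eta>) *\<^sub>R l1
        + (\<delta> * (T / \<eta>)) *\<^sub>R ((T / \<eta>) *\<^sub>R (A *v x2) - (((T - \<eta>) / \<eta>) *\<^sub>R (A *v x1) + b))
      = ls + (1 / \<eta>) *\<^sub>R (T *\<^sub>R (l2 - l1) + \<eta> *\<^sub>R (l1 - ls))"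
    unfolding update using assms(1) by (simp add: vec_eq_iff field_simps)
qed

lemma gap_bound_from_stationarity:
  fixes f :: "real^'n \<Rightarrow> real" and A :: "real^'n^'m" and T \<eta> :: real
    and x1 x2 xs :: "real^'n" and l1 l2 ls :: "real^'m"
  defines "v \<equiv> T *\<^sub>R (x2 - x1) + \<eta> *\<^sub>R (x1 - xs)"
    and "vl \<equiv> T *\<^sub>R (l2 - l1) + \<eta> *\<^sub>R (l1 - ls)"
  assumes "\<beta> \<ge> 0" "\<eta> > 0" "T \<ge> \<eta>" "\<delta> > 0" and "A *v xs = b"
    and bound: "\<And>y. f x2 - f y \<le> \<zeta> \<bullet> (x2 - y) + 1 / (2 * \<gamma>) * (norm (x2 - xb))\<^sup>2"
    and stationary: "\<zeta> \<bullet> v + (1 / \<gamma>) * ((x2 - xb) \<bullet> v)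
      + (\<beta> *\<^sub>R (A *v x2 - b) + ls + (1 / \<eta>) *\<^sub>R vl) \<bullet> (A *v v) = 0"
    and dual: "A *v v = (\<eta> / \<delta>) *\<^sub>R (l2 - lb)"
  shows "T * (aug_lag f A b \<beta> x2 ls - aug_lag f A b \<beta> xs ls)
      - (T - \<eta>) * (aug_lag f A b \<beta> x1 ls - aug_lag f A b \<beta> xs ls)
    \<le> (1 / \<gamma>) * (T / 2 * (norm (x2 - xb))\<^sup>2 - (x2 - xb) \<bullet> v)
      + (1 / \<delta>) * (T / 2 * (norm (l2 - lb))\<^sup>2 - (l2 - lb) \<bullet> vl)"
proof -
  define r2 r1 where "r2 = A *v x2 - b" and "r1 = A *v x1 - b"
  define N where "N = 1 / (2 * \<gamma>) * (norm (x2 - xb))\<^sup>2"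
  have Av: "A *v v = T *\<^sub>R r2 - (T - \<eta>) *\<^sub>R r1"
    using \<open>A *v xs = b\<close> unfolding v_def r2_def r1_def
    by (simp add: matrix_vector_right_distrib matrix_vector_mult_diff_distrib
        matrix_vector_mult_scaleR vec_eq_iff algebra_simps)
  have "(T - \<eta>) * (f x2 - f x1) \<le> (T - \<eta>) * (\<zeta> \<bullet> (x2 - x1) + N)"
    using bound[of x1] \<open>T \<ge> \<eta>\<close> unfolding N_def by (intro mult_left_mono) auto
  moreover have "\<eta> * (f x2 - f xs) \<le> \<eta> * (\<zeta> \<bullet> (x2 - xs) + N)"
    using bound[of xs] \<open>\<eta> > 0\<close> unfolding N_def by (intro mult_left_mono) auto
  moreover have "\<zeta> \<bullet> v = (T - \<eta>) * (\<zeta> \<bullet> (x2 - x1)) + \<eta> * (\<zeta> \<bullet> (x2 - xs))"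
    unfolding v_def by (simp add: inner_diff_right inner_add_right algebra_simps)
  ultimately have f_bound: "(T - \<eta>) * (f x2 - f x1) + \<eta> * (f x2 - f xs) \<le> \<zeta> \<bullet> v + T * N"
    by (simp add: algebra_simps)
  have "(1 / \<eta>) * (vl \<bullet> (A *v v)) = (1 / \<delta>) * ((l2 - lb) \<bullet> vl)"
    using \<open>\<eta> > 0\<close> unfolding dual by (simp add: inner_commute)
  then have zeta_v: "\<zeta> \<bullet> v = - ((1 / \<gamma>) * ((x2 - xb) \<bullet> v)) - \<beta> * (r2 \<bullet> (A *v v))
      - ls \<bullet> (A *v v) - (1 / \<delta>) * ((l2 - lb) \<bullet> vl)"
    using stationary unfolding r2_def by (simp add: inner_add_left algebra_simps)
  have gap: "T * (aug_lag f A b \<beta> x2 ls - aug_lag f A b \<beta> xs ls)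
      - (T - \<eta>) * (aug_lag f A b \<beta> x1 ls - aug_lag f A b \<beta> xs ls)
    = (T - \<eta>) * (f x2 - f x1) + \<eta> * (f x2 - f xs) + ls \<bullet> (A *v v)
      + \<beta> / 2 * (T * (norm r2)\<^sup>2 - (T - \<eta>) * (norm r1)\<^sup>2)"
    using \<open>A *v xs = b\<close> unfolding Av r2_def r1_def
    by (simp add: aug_lag_def inner_diff_right inner_add_right field_simps)
  have "\<beta> / 2 * (T * (norm r2)\<^sup>2 - (T - \<eta>) * (norm r1)\<^sup>2) - \<beta> * (r2 \<bullet> (A *v v))
      = - (\<beta> / 2 * ((T - \<eta>) * (norm (r2 - r1))\<^sup>2 + \<eta> * (norm r2)\<^sup>2))"
    unfolding Av power2_norm_eq_inner
    by (simp add: inner_diff_left inner_diff_right inner_commute algebra_simps)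
  moreover have "0 \<le> \<beta> / 2 * ((T - \<eta>) * (norm (r2 - r1))\<^sup>2 + \<eta> * (norm r2)\<^sup>2)"
    using \<open>\<beta> \<ge> 0\<close> \<open>T \<ge> \<eta>\<close> \<open>\<eta> > 0\<close> by simp
  moreover have "0 \<le> (1 / \<delta>) * (T / 2 * (norm (l2 - lb))\<^sup>2)"
    using \<open>\<delta> > 0\<close> \<open>T \<ge> \<eta>\<close> \<open>\<eta> > 0\<close> by simp
  moreover have "(1 / \<gamma>) * (T / 2 * (norm (x2 - xb))\<^sup>2) = T * N"
    unfolding N_def by simp
  ultimately show ?thesis
    using f_bound zeta_v gap by (simp only: right_diff_distrib)
qed

lemma momentum_energy_extrapolated_step:
  fixes x0 x1 x2 xs xb :: "'a::real_inner"
  assumes "T \<noteq> 0" and xb_def: "xb = x1 + ((S - 1) / T) *\<^sub>R (x1 - x0)"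
  shows "T * (T / 2 * (norm (x2 - xb))\<^sup>2 - (x2 - xb) \<bullet> (T *\<^sub>R (x2 - x1) + \<eta> *\<^sub>R (x1 - xs)))
      + momentum_energy \<eta> T (x2 - xs) (x2 - x1) - momentum_energy \<eta> S (x1 - xs) (x1 - x0)
    = - (1 - \<eta>) * (T - 1 / 2) * (norm (x2 - x1))\<^sup>2"
proof -
  have "x2 - xb = (x2 - x1) - ((S - 1) / T) *\<^sub>R (x1 - x0)" and "x2 - xs = (x2 - x1) + (x1 - xs)"
    by (simp_all add: xb_def)
  then show ?thesis
    by (simp only: momentum_energy_step[OF \<open>T \<noteq> 0\<close>])
qed

lemma iteration_gap_bound:
  fixes f :: "real^'n \<Rightarrow> real" and A :: "real^'n^'m" and b :: "real^'m"
    and T \<eta> \<beta> c :: real and x1 x2 xs xb :: "real^'n" and l1 l2 ls lb p r :: "real^'m"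
  assumes convex: "convex_on UNIV f" and grad: "\<And>y. GDERIV f y :> g y"
    and "\<gamma> > 0" "\<delta> > 0" "\<beta> \<ge> 0" "\<eta> > 0" "T \<ge> \<eta>"
    and solves: "(\<forall>y. phiI f A b \<beta> \<gamma> \<delta> xb p c r x2 \<le> phiI f A b \<beta> \<gamma> \<delta> xb p c r y)
      \<or> (\<exists>L>0. (\<forall>y z. norm (g y - g z) \<le> L * norm (y - z)) \<and> \<gamma> \<le> 1 / L
            \<and> (\<forall>y. phiII g A b \<beta> \<gamma> \<delta> xb p c r x2 \<le> phiII g A b \<beta> \<gamma> \<delta> xb p c r y))"
    and update: "l2 = lb + \<delta> *\<^sub>R (c *\<^sub>R (A *v x2) - r)"
    and c_def: "c = T / \<eta>"
    and p_def: "p = c *\<^sub>R lb - ((T - \<eta>) / \<eta>) *\<^sub>R l1"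
    and r_def: "r = ((T - \<eta>) / \<eta>) *\<^sub>R (A *v x1) + b"
    and kkt: "(xs, ls) \<in> KKT g A b"
  shows "T * (aug_lag f A b \<beta> x2 ls - aug_lag f A b \<beta> xs ls)
      - (T - \<eta>) * (aug_lag f A b \<beta> x1 ls - aug_lag f A b \<beta> xs ls)
    \<le> (1 / \<gamma>) * (T / 2 * (norm (x2 - xb))\<^sup>2 - (x2 - xb) \<bullet> (T *\<^sub>R (x2 - x1) + \<eta> *\<^sub>R (x1 - xs)))
      + (1 / \<delta>) * (T / 2 * (norm (l2 - lb))\<^sup>2 - (l2 - lb) \<bullet> (T *\<^sub>R (l2 - l1) + \<eta> *\<^sub>R (l1 - ls)))"
proof -
  have "A *v xs = b"
    using kkt by (simp add: KKT_def)
  obtain \<zeta> where bound: "\<And>y. f x2 - f y \<le> \<zeta> \<bullet> (x2 - y) + 1 / (2 * \<gamma>) * (norm (x2 - xb))\<^sup>2"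
    and stationary: "\<And>h. \<zeta> \<bullet> h + (1 / \<gamma>) * ((x2 - xb) \<bullet> h)
      + (\<beta> *\<^sub>R (A *v x2 - b) + p + (\<delta> * c) *\<^sub>R (c *\<^sub>R (A *v x2) - r)) \<bullet> (A *v h) = 0"
    using subproblem_solution[OF convex grad \<open>\<gamma> > 0\<close> solves] by blast
  note update' = update[unfolded c_def r_def]
  note dual_x = dual_update_identities(1)[OF \<open>\<eta> > 0\<close> \<open>\<delta> > 0\<close> \<open>A *v xs = b\<close> update']
  note dual_l = dual_update_identities(2)[OF \<open>\<eta> > 0\<close> \<open>\<delta> > 0\<close> \<open>A *v xs = b\<close> update',
      of l1 ls, folded c_def r_def, folded p_def]
  have "\<zeta> \<bullet> (T *\<^sub>R (x2 - x1) + \<eta> *\<^sub>R (x1 - xs))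
      + (1 / \<gamma>) * ((x2 - xb) \<bullet> (T *\<^sub>R (x2 - x1) + \<eta> *\<^sub>R (x1 - xs)))
      + (\<beta> *\<^sub>R (A *v x2 - b) + ls + (1 / \<eta>) *\<^sub>R (T *\<^sub>R (l2 - l1) + \<eta> *\<^sub>R (l1 - ls)))
        \<bullet> (A *v (T *\<^sub>R (x2 - x1) + \<eta> *\<^sub>R (x1 - xs))) = 0"
    using stationary by (simp only: add.assoc dual_l)
  then show ?thesis
    using gap_bound_from_stationarity[OF \<open>\<beta> \<ge> 0\<close> \<open>\<eta> > 0\<close> \<open>T \<ge> \<eta>\<close> \<open>\<delta> > 0\<close> \<open>A *v xs = b\<close> bound _ dual_x]
    by blast
qed

lemma energy_one_step:
  fixes f :: "real^'n \<Rightarrow> real" and A :: "real^'n^'m" and b :: "real^'m"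
    and S T \<eta> \<beta> \<gamma> \<delta> c :: real and x0 x1 x2 xs xb :: "real^'n" and l0 l1 l2 ls lb p r :: "real^'m"
  defines "H \<equiv> \<lambda>y. aug_lag f A b \<beta> y ls - aug_lag f A b \<beta> xs ls"
    and "B \<equiv> \<lambda>\<tau> y y' l l'. (1 / \<gamma>) * momentum_energy \<eta> \<tau> (y - xs) (y - y')
                          + (1 / \<delta>) * momentum_energy \<eta> \<tau> (l - ls) (l - l')"
  assumes convex: "convex_on UNIV f" and grad: "\<And>y. GDERIV f y :> g y"
    and "\<gamma> > 0" "\<delta> > 0" "\<beta> \<ge> 0" "\<eta> > 0" "T \<ge> \<eta>"
    and rate: "T\<^sup>2 - S\<^sup>2 \<le> \<rho> * T"
    and solves: "(\<forall>y. phiI f A b \<beta> \<gamma> \<delta> xb p c r x2 \<le> phiI f A b \<beta> \<gamma> \<delta> xb p c r y)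
      \<or> (\<exists>L>0. (\<forall>y z. norm (g y - g z) \<le> L * norm (y - z)) \<and> \<gamma> \<le> 1 / L
            \<and> (\<forall>y. phiII g A b \<beta> \<gamma> \<delta> xb p c r x2 \<le> phiII g A b \<beta> \<gamma> \<delta> xb p c r y))"
    and update: "l2 = lb + \<delta> *\<^sub>R (c *\<^sub>R (A *v x2) - r)"
    and xb_def: "xb = x1 + ((S - 1) / T) *\<^sub>R (x1 - x0)"
    and lb_def: "lb = l1 + ((S - 1) / T) *\<^sub>R (l1 - l0)"
    and c_def: "c = T / \<eta>"
    and p_def: "p = c *\<^sub>R lb - ((T - \<eta>) / \<eta>) *\<^sub>R l1"
    and r_def: "r = ((T - \<eta>) / \<eta>) *\<^sub>R (A *v x1) + b"
    and kkt: "(xs, ls) \<in> KKT g A b"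
  shows "(T\<^sup>2 * H x2 + B T x2 x1 l2 l1) - (S\<^sup>2 * H x1 + B S x1 x0 l1 l0)
     \<le> (\<rho> - \<eta>) * T * H x1 - (1 - \<eta>) * (T - 1 / 2) * Mnorm2 \<gamma> \<delta> (x2 - x1) (l2 - l1)"
proof -
  have "T > 0" and "T \<noteq> 0"
    using \<open>\<eta> > 0\<close> \<open>T \<ge> \<eta>\<close> by linarith+
  define Px Pl
    where "Px = T / 2 * (norm (x2 - xb))\<^sup>2 - (x2 - xb) \<bullet> (T *\<^sub>R (x2 - x1) + \<eta> *\<^sub>R (x1 - xs))"
      and "Pl = T / 2 * (norm (l2 - lb))\<^sup>2 - (l2 - lb) \<bullet> (T *\<^sub>R (l2 - l1) + \<eta> *\<^sub>R (l1 - ls))"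
  have "T * H x2 - (T - \<eta>) * H x1 \<le> (1 / \<gamma>) * Px + (1 / \<delta>) * Pl"
    using iteration_gap_bound[OF convex grad \<open>\<gamma> > 0\<close> \<open>\<delta> > 0\<close> \<open>\<beta> \<ge> 0\<close> \<open>\<eta> > 0\<close> \<open>T \<ge> \<eta>\<close>
        solves update c_def p_def r_def kkt]
    by (simp only: H_def Px_def Pl_def)
  then have gap_step: "T * (T * H x2 - (T - \<eta>) * H x1) \<le> T * ((1 / \<gamma>) * Px + (1 / \<delta>) * Pl)"
    using \<open>T > 0\<close> by (intro mult_left_mono) auto
  have "0 \<le> (\<rho> * T - (T\<^sup>2 - S\<^sup>2)) * H x1"
    using rate aug_lag_gap_nonneg[OF convex grad \<open>\<beta> \<ge> 0\<close> kkt] by (simp add: H_def)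
  then have rate_step: "T\<^sup>2 * H x2 - S\<^sup>2 * H x1 \<le> T * (T * H x2 - (T - \<eta>) * H x1) + (\<rho> - \<eta>) * T * H x1"
    by (simp add: algebra_simps power2_eq_square)
  have "T * ((1 / \<gamma>) * Px + (1 / \<delta>) * Pl) + B T x2 x1 l2 l1 - B S x1 x0 l1 l0
      = (1 / \<gamma>) * (T * Px + momentum_energy \<eta> T (x2 - xs) (x2 - x1) - momentum_energy \<eta> S (x1 - xs) (x1 - x0))
      + (1 / \<delta>) * (T * Pl + momentum_energy \<eta> T (l2 - ls) (l2 - l1) - momentum_energy \<eta> S (l1 - ls) (l1 - l0))"
    by (simp add: B_def algebra_simps)
  also have "\<dots> = - (1 - \<eta>) * (T - 1 / 2) * Mnorm2 \<gamma> \<delta> (x2 - x1) (l2 - l1)"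
    unfolding Px_def Pl_def
      momentum_energy_extrapolated_step[OF \<open>T \<noteq> 0\<close> xb_def]
      momentum_energy_extrapolated_step[OF \<open>T \<noteq> 0\<close> lb_def]
    using \<open>\<gamma> > 0\<close> \<open>\<delta> > 0\<close> by (simp add: Mnorm2_def field_simps)
  finally show ?thesis
    using rate_step gap_step by linarith
qed

theorem lemma3p2:
  fixes f :: "real^'n \<Rightarrow> real" and g :: "real^'n \<Rightarrow> real^'n"
    and A :: "real^'n^'m" and b :: "real^'m"
    and t :: "nat \<Rightarrow> real" and \<rho> \<eta> \<gamma> \<delta> \<beta> :: real
    and x :: "nat \<Rightarrow> real^'n" and lam :: "nat \<Rightarrow> real^'m"
    and xs :: "real^'n" and ls :: "real^'m"
  assumes f_convex: "convex_on UNIV f"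
    and f_grad: "\<And>y. GDERIV f y :> g y"
    and g_cont: "continuous_on UNIV g"
    and t_mono: "\<And>k. k \<ge> 1 \<Longrightarrow> t k \<le> t (Suc k)"
    and t1: "t 1 = 1"
    and t_gt: "\<And>k. k > 2 \<Longrightarrow> t k > 1"
    and t_lim: "filterlim t at_top sequentially"
    and t_rate: "\<And>k. k \<ge> 1 \<Longrightarrow> (t (Suc k))\<^sup>2 - (t k)\<^sup>2 \<le> \<rho> * t (Suc k)"
    and rho: "0 < \<rho>" "\<rho> \<le> 1"
    and eta: "\<rho> \<le> \<eta>" "\<eta> \<le> 1"
    and gamma: "\<gamma> > 0" and delta: "\<delta> > 0" and beta: "\<beta> \<ge> 0"
    and x0: "x 0 = x 1" and lam0: "lam 0 = lam 1"
    and step: "(\<forall>k\<ge>1. \<forall>y.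
                 phiI f A b \<beta> \<gamma> \<delta>
                   (x k + ((t k - 1) / t (Suc k)) *\<^sub>R (x k - x (k - 1)))
                   ((t (Suc k) / \<eta>) *\<^sub>R (lam k + ((t k - 1) / t (Suc k)) *\<^sub>R (lam k - lam (k - 1)))
                     - ((t (Suc k) - \<eta>) / \<eta>) *\<^sub>R lam k)
                   (t (Suc k) / \<eta>)
                   (((t (Suc k) - \<eta>) / \<eta>) *\<^sub>R (A *v x k) + b)
                   (x (Suc k))
                 \<le> phiI f A b \<beta> \<gamma> \<delta>
                   (x k + ((t k - 1) / t (Suc k)) *\<^sub>R (x k - x (k - 1)))
                   ((t (Suc k) / \<eta>) *\<^sub>R (lam k + ((t k - 1) / t (Suc k)) *\<^sub>R (lam k - lam (k - 1)))
                     - ((t (Suc k) - \<eta>) / \<eta>) *\<^sub>R lam k)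
                   (t (Suc k) / \<eta>)
                   (((t (Suc k) - \<eta>) / \<eta>) *\<^sub>R (A *v x k) + b)
                   y)
             \<or> (\<exists>L>0. (\<forall>y z. norm (g y - g z) \<le> L * norm (y - z)) \<and> \<gamma> \<le> 1 / L \<and>
                 (\<forall>k\<ge>1. \<forall>y.
                 phiII g A b \<beta> \<gamma> \<delta>
                   (x k + ((t k - 1) / t (Suc k)) *\<^sub>R (x k - x (k - 1)))
                   ((t (Suc k) / \<eta>) *\<^sub>R (lam k + ((t k - 1) / t (Suc k)) *\<^sub>R (lam k - lam (k - 1)))
                     - ((t (Suc k) - \<eta>) / \<eta>) *\<^sub>R lam k)
                   (t (Suc k) / \<eta>)
                   (((t (Suc k) - \<eta>) / \<eta>) *\<^sub>R (A *v x k) + b)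
                   (x (Suc k))
                 \<le> phiII g A b \<beta> \<gamma> \<delta>
                   (x k + ((t k - 1) / t (Suc k)) *\<^sub>R (x k - x (k - 1)))
                   ((t (Suc k) / \<eta>) *\<^sub>R (lam k + ((t k - 1) / t (Suc k)) *\<^sub>R (lam k - lam (k - 1)))
                     - ((t (Suc k) - \<eta>) / \<eta>) *\<^sub>R lam k)
                   (t (Suc k) / \<eta>)
                   (((t (Suc k) - \<eta>) / \<eta>) *\<^sub>R (A *v x k) + b)
                   y))"
    and lam_step: "\<And>k. k \<ge> 1 \<Longrightarrow>
       lam (Suc k) = (lam k + ((t k - 1) / t (Suc k)) *\<^sub>R (lam k - lam (k - 1)))
         + \<delta> *\<^sub>R ((t (Suc k) / \<eta>) *\<^sub>R (A *v x (Suc k))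
                    - (((t (Suc k) - \<eta>) / \<eta>) *\<^sub>R (A *v x k) + b))"
    and kkt: "(xs, ls) \<in> KKT g A b"
  shows "\<forall>k\<ge>1.
    (let H = (\<lambda>j. aug_lag f A b \<beta> (x j) ls - aug_lag f A b \<beta> xs ls);
         B = (\<lambda>j. 1 / 2 * Mnorm2 \<gamma> \<delta>
                    (\<eta> *\<^sub>R (x j - xs) + (t j - 1) *\<^sub>R (x j - x (j - 1)))
                    (\<eta> *\<^sub>R (lam j - ls) + (t j - 1) *\<^sub>R (lam j - lam (j - 1)))
                  + \<eta> * (1 - \<eta>) / 2 * Mnorm2 \<gamma> \<delta> (x j - xs) (lam j - ls));
         E = (\<lambda>j. (t j)\<^sup>2 * H j + B j)
     in E (Suc k) - E k \<le> (\<rho> - \<eta>) * t (Suc k) * H k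
          - (1 - \<eta>) * (t (Suc k) - 1 / 2) * Mnorm2 \<gamma> \<delta> (x (Suc k) - x k) (lam (Suc k) - lam k))"
proof (intro allI impI, goal_cases)
  case (1 k)
  have t_ge_1: "t j \<ge> 1" if "j \<ge> 1" for j
    using that by (induction j rule: dec_induct) (use t1 t_mono in \<open>auto intro: order_trans\<close>)
  have "\<eta> > 0"
    using rho eta by linarith
  have "t (Suc k) \<ge> \<eta>"
    using t_ge_1[of "Suc k"] eta by linarith
  define xb lb c p r
    where "xb = x k + ((t k - 1) / t (Suc k)) *\<^sub>R (x k - x (k - 1))"
      and "lb = lam k + ((t k - 1) / t (Suc k)) *\<^sub>R (lam k - lam (k - 1))"
      and "c = t (Suc k) / \<eta>"
      and "p = c *\<^sub>R lb - ((t (Suc k) - \<eta>) / \<eta>) *\<^sub>R lam k"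
      and "r = ((t (Suc k) - \<eta>) / \<eta>) *\<^sub>R (A *v x k) + b"
  have "(\<forall>y. phiI f A b \<beta> \<gamma> \<delta> xb p c r (x (Suc k)) \<le> phiI f A b \<beta> \<gamma> \<delta> xb p c r y)
      \<or> (\<exists>L>0. (\<forall>y z. norm (g y - g z) \<le> L * norm (y - z)) \<and> \<gamma> \<le> 1 / L
            \<and> (\<forall>y. phiII g A b \<beta> \<gamma> \<delta> xb p c r (x (Suc k)) \<le> phiII g A b \<beta> \<gamma> \<delta> xb p c r y))"
    using step \<open>k \<ge> 1\<close> unfolding xb_def lb_def c_def p_def r_def by blast
  moreover have "lam (Suc k) = lb + \<delta> *\<^sub>R (c *\<^sub>R (A *v x (Suc k)) - r)"
    using lam_step[OF \<open>k \<ge> 1\<close>] by (simp add: lb_def c_def r_def)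
  ultimately show ?case
    using energy_one_step[OF f_convex f_grad gamma delta beta \<open>\<eta> > 0\<close> \<open>t (Suc k) \<ge> \<eta>\<close>
        t_rate[OF \<open>k \<ge> 1\<close>] _ _ xb_def lb_def c_def p_def r_def kkt]
    unfolding Let_def Mnorm2_momentum_energy by simp
qed

end
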